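(* Let $a,m\in\mathbb{Z}$ with $m\neq 0$, and let $s\ge 0$ and $m_s\ge 1$ be as defined in the context. Then $$a^{\varphi(m_s)+s}\equiv a^s \pmod{m}.$$
   Context: $\gcd$ denotes the greatest common divisor, always chosen positive, with the convention $\gcd(0,n)=n$ for $n>0$. $\varphi$ denotes Euler's totient function, and $a^0=1$. Since congruence modulo $m$ and modulo $-m$ coincide, the construction uses $|m|$. The sequences are defined as follows. - Put $d_0=\gcd(a,|m|)$ and $m_0=|m|/d_0$. - For $i\ge 1$, and only as long as $d_{i-1}\neq 1$, put $d_i=\gcd(d_{i-1},m_{i-1})$ and $m_i=m_{i-1}/d_i$. The index $s$ is the least index $i\ge 0$ with $d_i=1$, which exists. The number $m_s$ is the corresponding term of the sequence $(m_i)$. Equivalently, $s$ and $m_s$ are the output of the following algorithm: 1. Start with $A=a$, $M=|m|$, $i=0$. 2. Compute $d=\gcd(A,M)$ and $M'=M/d$. 3. If $d=1$, output $s=i$ and $m_s=M'$. Otherwise set $A=d$, $M=M'$, $i=i+1$, and repeat from step 2. *)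

theory Defs
  imports "HOL-Number_Theory.Number_Theory"
begin

text \<open>The sequences (d_i, m_i) of the paper, for given a and m (using |m|).
  They are defined for every index i; only the values up to the first index
  with d_i = 1 are relevant.\<close>
primrec dm_seq :: "int \<Rightarrow> int \<Rightarrow> nat \<Rightarrow> int \<times> int" where
  "dm_seq a m 0 = (gcd a \<bar>m\<bar>, \<bar>m\<bar> div gcd a \<bar>m\<bar>)"
| "dm_seq a m (Suc i) =
     (let d = fst (dm_seq a m i); mm = snd (dm_seq a m i); d' = gcd d mm
      in (d', mm div d'))"

definition d_seq :: "int \<Rightarrow> int \<Rightarrow> nat \<Rightarrow> int" where
  "d_seq a m i = fst (dm_seq a m i)"

definition m_seq :: "int \<Rightarrow> int \<Rightarrow> nat \<Rightarrow> int" where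
  "m_seq a m i = snd (dm_seq a m i)"

definition s_idx :: "int \<Rightarrow> int \<Rightarrow> nat" where
  "s_idx a m = (LEAST i. d_seq a m i = 1)"

end

theory Submission
  imports Defs
begin

text \<open>Unwinding the recursion gives \<open>|m| = d_0 \<cdots> d_(s-1) m_s\<close> because \<open>d_s = 1\<close>.
  Every \<open>d_i\<close> divides \<open>a\<close>, so \<open>d_0 \<cdots> d_(s-1)\<close> divides \<open>a^s\<close>. The invariant
  \<open>gcd a m_i | d_i\<close> together with \<open>d_s = 1\<close> makes \<open>a\<close> coprime to \<open>m_s\<close>, so by Euler's
  theorem \<open>m_s\<close> divides \<open>a^\<phi>(m_s) - 1\<close>. Hence \<open>|m|\<close> divides \<open>a^s (a^\<phi>(m_s) - 1)\<close>.
  The index \<open>s\<close> exists because \<open>m_i\<close> strictly decreases as long as \<open>d_i \<noteq> 1\<close>.\<close>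

lemma euler_theorem_int:
  fixes a n :: int
  assumes "coprime a n"
  shows "[a ^ totient (nat n) = 1] (mod n)"
proof (cases "n \<le> 1")
  case True
  then have "n = 1 \<or> nat n = 0" by auto
  then show ?thesis by auto
next
  case False
  then have "residues n" by (simp add: residues_def)
  then show ?thesis using residues.euler_theorem assms by blast
qed

lemma cong_pow_totient_add:
  fixes a k n :: int
  assumes "k dvd a ^ s" and "coprime a n"
  shows "[a ^ (totient (nat n) + s) = a ^ s] (mod k * n)"
proof -
  have "n dvd a ^ totient (nat n) - 1"
    using euler_theorem_int[OF assms(2)] by (simp add: cong_iff_dvd_diff)
  then have "k * n dvd a ^ s * (a ^ totient (nat n) - 1)"
    using assms(1) by (rule mult_dvd_mono[rotated])
  then show ?thesis
    by (simp add: cong_iff_dvd_diff algebra_simps power_add)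
qed

lemma d_seq_0: "d_seq a m 0 = gcd a \<bar>m\<bar>"
  and m_seq_0: "m_seq a m 0 = \<bar>m\<bar> div gcd a \<bar>m\<bar>"
  by (simp_all add: d_seq_def m_seq_def)

lemma d_seq_Suc: "d_seq a m (Suc i) = gcd (d_seq a m i) (m_seq a m i)"
  and m_seq_Suc: "m_seq a m (Suc i) = m_seq a m i div d_seq a m (Suc i)"
  by (simp_all add: d_seq_def m_seq_def Let_def)

lemma d_seq_dvd: "d_seq a m i dvd a"
  by (induction i) (auto simp: d_seq_0 d_seq_Suc intro: dvd_trans)

lemma m_seq_eq_mult: "m_seq a m i = d_seq a m (Suc i) * m_seq a m (Suc i)"
  by (simp add: d_seq_Suc m_seq_Suc)

lemma abs_eq_prod_d_seq_mult_m_seq: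
  "\<bar>m\<bar> = (\<Prod>j\<le>i. d_seq a m j) * m_seq a m i"
proof (induction i)
  case 0
  show ?case by (simp add: d_seq_0 m_seq_0)
next
  case (Suc i)
  then show ?case by (simp add: m_seq_eq_mult[of a m i] mult_ac)
qed

lemma
  assumes "m \<noteq> 0"
  shows d_seq_pos: "d_seq a m i > 0" and m_seq_pos: "m_seq a m i > 0"
proof -
  have "(\<Prod>j\<le>i. d_seq a m j) * m_seq a m i \<noteq> 0"
    using assms abs_eq_prod_d_seq_mult_m_seq[of m a i] by (metis abs_eq_0)
  moreover have d_nonneg: "d_seq a m j \<ge> 0" for j
    by (cases j) (simp_all add: d_seq_0 d_seq_Suc)
  moreover have "m_seq a m i \<ge> 0"
    by (induction i) (simp_all add: m_seq_0 m_seq_Suc div_int_pos_iff d_nonneg)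
  ultimately show "d_seq a m i > 0" "m_seq a m i > 0"
    by (auto simp: less_le)
qed

lemma gcd_m_seq_dvd_d_seq: "gcd a (m_seq a m i) dvd d_seq a m i"
proof (induction i)
  case 0
  have "m_seq a m 0 dvd \<bar>m\<bar>"
    using abs_eq_prod_d_seq_mult_m_seq[of m a 0] by (metis dvd_triv_right)
  then show ?case
    by (auto simp: d_seq_0 intro: dvd_trans)
next
  case (Suc i)
  have "m_seq a m (Suc i) dvd m_seq a m i"
    using m_seq_eq_mult by (metis dvd_triv_right)
  then have "gcd a (m_seq a m (Suc i)) dvd gcd a (m_seq a m i)"
    by (auto intro: dvd_trans)
  with Suc.IH have "gcd a (m_seq a m (Suc i)) dvd d_seq a m i"
    by (meson dvd_trans)
  moreover have "gcd a (m_seq a m (Suc i)) dvd m_seq a m i"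
    using \<open>m_seq a m (Suc i) dvd m_seq a m i\<close> by (auto intro: dvd_trans)
  ultimately show ?case
    by (simp add: d_seq_Suc)
qed

lemma ex_d_seq_eq_1:
  assumes "m \<noteq> 0"
  shows "\<exists>i. d_seq a m i = 1"
proof (rule ccontr)
  assume "\<nexists>i. d_seq a m i = 1"
  then have d_gt_1: "d_seq a m i > 1" for i
    using d_seq_pos[OF assms, of a i] by (metis int_one_le_iff_zero_less order_le_neq_trans)
  have decr: "m_seq a m (Suc i) < m_seq a m i" for i
    unfolding m_seq_Suc
    by (rule int_div_less_self) (use m_seq_pos[OF assms, of a i] d_gt_1[of "Suc i"] in auto)
  have "m_seq a m i + int i \<le> m_seq a m 0" for i
  proof (induction i)
    case (Suc i)
    then show ?case using decr[of i] by simp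
  qed simp
  from this[of "nat (m_seq a m 0)"] m_seq_pos[OF assms, of a 0] m_seq_pos[OF assms, of a "nat (m_seq a m 0)"]
  show False by simp
qed

lemma d_seq_s_idx: "m \<noteq> 0 \<Longrightarrow> d_seq a m (s_idx a m) = 1"
  unfolding s_idx_def by (rule LeastI_ex) (rule ex_d_seq_eq_1)

lemma coprime_m_seq_s_idx: "m \<noteq> 0 \<Longrightarrow> coprime a (m_seq a m (s_idx a m))"
  using gcd_m_seq_dvd_d_seq[of a m "s_idx a m"] d_seq_s_idx[of m a]
  by (simp add: coprime_iff_gcd_eq_1)

lemma prod_d_seq_dvd_power: "(\<Prod>j<n. d_seq a m j) dvd a ^ n"
  by (induction n) (simp_all add: d_seq_dvd mult_dvd_mono mult.commute)

theorem mainTheorem5: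
  fixes a m :: int
  assumes "m \<noteq> 0"
  shows "[a ^ (totient (nat (m_seq a m (s_idx a m))) + s_idx a m) = a ^ (s_idx a m)] (mod m)"
proof -
  define s where "s = s_idx a m"
  have "\<bar>m\<bar> = (\<Prod>j<s. d_seq a m j) * m_seq a m s"
    using abs_eq_prod_d_seq_mult_m_seq[of m a s] d_seq_s_idx[OF assms]
    by (simp add: s_def lessThan_Suc_atMost[symmetric])
  moreover have "[a ^ (totient (nat (m_seq a m s)) + s) = a ^ s] (mod (\<Prod>j<s. d_seq a m j) * m_seq a m s)"
    using prod_d_seq_dvd_power coprime_m_seq_s_idx[OF assms]
    unfolding s_def by (rule cong_pow_totient_add)
  ultimately show ?thesis
    by (metis cong_abs s_def)
qed

end
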